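(* On uniform instances with popularity $p=1/2$ on $n+1$ agents, the AVD mechanism, with any choice of default node, has expected additive approximation $\mathbb{E}[\Delta(\mathbf{x})-d_w(\mathbf{x})]=\Omega(\ln n)$, where $w$ is the AVD winner.
   Context: A nomination profile on a finite agent set $N$ is a directed graph $\mathbf{x}$ on $N$ without self-loops. For $S\subseteq N$, $d_j(S,\mathbf{x})=|\{i\in S:(i,j)\text{ is an edge}\}|$; $d_j(\mathbf{x})=d_j(N\setminus\{j\},\mathbf{x})$ and $\Delta(\mathbf{x})=\max_j d_j(\mathbf{x})$. Uniform model with popularity $p$: each directed edge $(i,j)$, $i\ne j$, is present independently with probability $p$. AVD with default node $t$: a non-default node $k$ beats a non-default node $j$ if $d_k(N\setminus\{j,k,t\},\mathbf{x})>d_j(N\setminus\{j,k,t\},\mathbf{x})$; a non-default $k$ beats $t$ if $d_k(N\setminus\{k,t\},\mathbf{x})>d_t(N\setminus\{k,t\},\mathbf{x})$, and $t$ beats $k$ if $d_k(N\setminus\{k,t\},\mathbf{x})<d_t(N\setminus\{k,t\},\mathbf{x})$. AVD returns the node that beats every other node if it exists, otherwise $t$. *)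

theory Defs
  imports "HOL-Probability.Probability"
begin

text \<open>Agents are 0..n (n+1 agents). A profile is a set of directed edges (i,j).\<close>

definition agents :: "nat \<Rightarrow> nat set" where
  "agents n = {..n}"

definition possible_edges :: "nat \<Rightarrow> (nat \<times> nat) set" where
  "possible_edges n = {(i, j). i \<in> agents n \<and> j \<in> agents n \<and> i \<noteq> j}"

definition uniform_model :: "nat \<Rightarrow> real \<Rightarrow> (nat \<times> nat) set pmf" where
  "uniform_model n p =
     map_pmf (\<lambda>f. {e. f e}) (Pi_pmf (possible_edges n) False (\<lambda>_. bernoulli_pmf p))"

definition indeg :: "nat set \<Rightarrow> (nat \<times> nat) set \<Rightarrow> nat \<Rightarrow> nat" where
  "indeg S x j = card {i \<in> S. (i, j) \<in> x}"

definition deg :: "nat \<Rightarrow> (nat \<times> nat) set \<Rightarrow> nat \<Rightarrow> nat" where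
  "deg n x j = indeg (agents n - {j}) x j"

definition max_deg :: "nat \<Rightarrow> (nat \<times> nat) set \<Rightarrow> nat" where
  "max_deg n x = Max (deg n x ` agents n)"

definition avd_beats :: "nat \<Rightarrow> nat \<Rightarrow> (nat \<times> nat) set \<Rightarrow> nat \<Rightarrow> nat \<Rightarrow> bool" where
  "avd_beats n t x k j =
     (if k \<noteq> t \<and> j \<noteq> t then
        indeg (agents n - {j, k, t}) x k > indeg (agents n - {j, k, t}) x j
      else if k \<noteq> t \<and> j = t then
        indeg (agents n - {k, t}) x k > indeg (agents n - {k, t}) x t
      else if k = t \<and> j \<noteq> t then
        indeg (agents n - {j, t}) x j < indeg (agents n - {j, t}) x t
      else False)"

definition avd :: "nat \<Rightarrow> nat \<Rightarrow> (nat \<times> nat) set \<Rightarrow> nat" where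
  "avd n t x =
     (if \<exists>k \<in> agents n. \<forall>j \<in> agents n - {k}. avd_beats n t x k j
      then (THE k. k \<in> agents n \<and> (\<forall>j \<in> agents n - {k}. avd_beats n t x k j))
      else t)"

end

theory Submission
  imports Defs "HOL-Real_Asymp.Real_Asymp"
begin

text \<open>Write \<open>m = n - 2\<close>. For non-default nodes \<open>a < b\<close> and \<open>L\<close> slightly above a threshold
  \<open>D\<close>, consider the event that \<open>a\<close> and \<open>b\<close> both receive exactly \<open>L\<close> votes, every other
  non-default node at most \<open>L - 5\<close> and the default node \<open>t\<close> at most about \<open>m/2 + \<surd>m\<close>, each
  node counting only the votes of a fixed set of \<open>m\<close> agents. Then \<open>a\<close> and \<open>b\<close> beat everybody
  but tie with each other, so AVD returns \<open>t\<close> and loses about \<open>L - m/2\<close>. These events are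
  disjoint, and by independence their probabilities are products of \<open>Bin(m, 1/2)\<close> probabilities.
  Take \<open>D\<close> to be the last \<open>j\<close> with \<open>m \<cdot> P(Bin(m, 1/2) \<ge> j) > 1/2\<close>; then
  \<open>\<sigma> = D - m/2\<close> is of order \<open>\<surd>(m ln m)\<close>, each \<open>L\<close> in a window of length about \<open>m/\<sigma>\<close> above \<open>D\<close>
  contributes about \<open>\<sigma> \<cdot> (\<sigma>/m\<^sup>2)\<^sup>2\<close>, and summing over the \<open>m\<^sup>2/2\<close> pairs gives an expected
  loss of order \<open>\<sigma>\<^sup>2/m\<close>, i.e. of order \<open>ln n\<close>.\<close>

section \<open>Degrees and tie events\<close>

lemma finite_agents [simp]: "finite (agents n)"
  by (simp add: agents_def)

lemma card_agents [simp]: "card (agents n) = Suc n"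
  by (simp add: agents_def)

lemma indeg_le_add_card_diff:
  assumes "finite S" "finite S'"
  shows "indeg S x j \<le> indeg S' x j + card (S - S')"
proof -
  have "{i \<in> S. (i, j) \<in> x} \<subseteq> {i \<in> S'. (i, j) \<in> x} \<union> (S - S')" by auto
  hence "card {i \<in> S. (i, j) \<in> x} \<le> card ({i \<in> S'. (i, j) \<in> x} \<union> (S - S'))"
    using assms by (intro card_mono) auto
  also have "\<dots> \<le> card {i \<in> S'. (i, j) \<in> x} + card (S - S')" by (rule card_Un_le)
  finally show ?thesis unfolding indeg_def .
qed

lemma indeg_mono:
  assumes "S \<subseteq> S'" "finite S'"
  shows "indeg S x j \<le> indeg S' x j"
  unfolding indeg_def using assms by (intro card_mono) auto

lemma avd_beats_asym: "avd_beats n t x k j \<Longrightarrow> \<not> avd_beats n t x j k"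
  unfolding avd_beats_def by (auto simp: insert_commute split: if_splits)

lemma avd_in_agents:
  assumes "t \<in> agents n"
  shows "avd n t x \<in> agents n"
proof (cases "\<exists>k \<in> agents n. \<forall>j \<in> agents n - {k}. avd_beats n t x k j")
  case True
  then obtain k where k: "k \<in> agents n" "\<forall>j \<in> agents n - {k}. avd_beats n t x k j" by blast
  have "k' = k" if "k' \<in> agents n" "\<forall>j \<in> agents n - {k'}. avd_beats n t x k' j" for k'
    using that k avd_beats_asym by blast
  hence "(THE k. k \<in> agents n \<and> (\<forall>j \<in> agents n - {k}. avd_beats n t x k j)) = k"
    using k by (intro the_equality) blast+
  thus ?thesis using True k by (simp add: avd_def)
next
  case False
  thus ?thesis using assms unfolding avd_def by (simp only: if_False)
qed

lemma avd_loss_nonneg: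
  assumes "t \<in> agents n"
  shows "0 \<le> real (max_deg n x) - real (deg n x (avd n t x))"
proof -
  have "deg n x (avd n t x) \<le> max_deg n x"
    unfolding max_deg_def using avd_in_agents[OF assms] by (intro Max_ge) auto
  thus ?thesis by simp
qed

text \<open>The counts leave out the votes of \<open>a\<close> and \<open>b\<close>, so that each has \<open>n - 2\<close> trials; the
  counted edges of different nodes have different heads, which makes the counts independent.\<close>

definition tie_sources :: "nat \<Rightarrow> nat \<Rightarrow> nat \<Rightarrow> nat \<Rightarrow> nat \<Rightarrow> nat set" where
  "tie_sources n t a b v =
     (if v \<in> {a, b, t} then agents n - {a, b, t} else agents n - {a, b, v})"

definition tie_counts :: "nat \<Rightarrow> nat \<Rightarrow> nat \<Rightarrow> nat \<Rightarrow> nat \<Rightarrow> nat \<Rightarrow> nat set" where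
  "tie_counts t a b L T v = (if v = a \<or> v = b then {L} else if v = t then {..T} else {..L - 5})"

definition tie_event :: "nat \<Rightarrow> nat \<Rightarrow> nat \<Rightarrow> nat \<Rightarrow> nat \<Rightarrow> nat \<Rightarrow> (nat \<times> nat) set set" where
  "tie_event n t a b L T =
     {x. \<forall>v \<in> agents n. indeg (tie_sources n t a b v) x v \<in> tie_counts t a b L T v}"

context
  fixes n t a b L T x
  assumes nodes: "t \<in> agents n" "a \<in> agents n" "b \<in> agents n" "a \<noteq> b" "a \<noteq> t" "b \<noteq> t"
    and L_ge_5: "5 \<le> L" and tie: "x \<in> tie_event n t a b L T"
begin

lemma tie_indeg_a: "indeg (agents n - {a, b, t}) x a = L"
  using tie nodes unfolding tie_event_def tie_sources_def tie_counts_def by auto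

lemma tie_indeg_b: "indeg (agents n - {a, b, t}) x b = L"
  using tie nodes unfolding tie_event_def tie_sources_def tie_counts_def by force

lemma tie_indeg_default: "indeg (agents n - {a, b, t}) x t \<le> T"
  using tie nodes unfolding tie_event_def tie_sources_def tie_counts_def by force

lemma tie_indeg_other:
  assumes "k \<in> agents n - {a, b, t}"
  shows "indeg (agents n - {a, b, k}) x k \<le> L - 5"
proof -
  have "indeg (tie_sources n t a b k) x k \<in> tie_counts t a b L T k"
    using tie assms by (auto simp: tie_event_def)
  thus ?thesis using assms by (auto simp: tie_sources_def tie_counts_def)
qed

lemma tie_deg_default: "deg n x t \<le> T + 2"
proof -
  have "deg n x t \<le> indeg (agents n - {a, b, t}) x t + card ((agents n - {t}) - (agents n - {a, b, t}))"
    unfolding deg_def by (rule indeg_le_add_card_diff) auto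
  also have "card ((agents n - {t}) - (agents n - {a, b, t})) \<le> card {a, b}"
    by (rule card_mono) auto
  also have "card {a, b} \<le> 2" by (simp add: card_insert_if)
  finally show ?thesis using tie_indeg_default by linarith
qed

lemma tie_deg_a: "L \<le> deg n x a"
  using indeg_mono[of "agents n - {a, b, t}" "agents n - {a}" x a] tie_indeg_a
  by (auto simp: deg_def)

lemma tie_deg_b: "L \<le> deg n x b"
  using indeg_mono[of "agents n - {a, b, t}" "agents n - {b}" x b] tie_indeg_b
  by (auto simp: deg_def)

lemma tie_deg_other:
  assumes "k \<in> agents n - {a, b, t}"
  shows "deg n x k + 3 \<le> L"
proof -
  have "deg n x k \<le> indeg (agents n - {a, b, k}) x k + card ((agents n - {k}) - (agents n - {a, b, k}))"
    unfolding deg_def by (rule indeg_le_add_card_diff) auto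
  also have "card ((agents n - {k}) - (agents n - {a, b, k})) \<le> card {a, b}"
    by (rule card_mono) auto
  also have "card {a, b} \<le> 2" by (simp add: card_insert_if)
  finally show ?thesis using tie_indeg_other[OF assms] L_ge_5 by linarith
qed

lemma tie_max_deg_ge: "L \<le> max_deg n x"
proof -
  have "deg n x a \<le> max_deg n x" unfolding max_deg_def using nodes by (intro Max_ge) auto
  thus ?thesis using tie_deg_a by simp
qed

lemma tie_no_other_winner:
  assumes "k \<in> agents n" "k \<noteq> t"
  shows "\<exists>j \<in> agents n - {k}. \<not> avd_beats n t x k j"
proof -
  consider "k = a" | "k = b" | "k \<in> agents n - {a, b, t}" using assms by auto
  thus ?thesis
  proof cases
    case 1
    have "\<not> avd_beats n t x k b"
      using 1 nodes tie_indeg_a tie_indeg_b by (simp add: avd_beats_def insert_commute)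
    thus ?thesis using 1 nodes by auto
  next
    case 2
    have "\<not> avd_beats n t x k a"
      using 2 nodes tie_indeg_a tie_indeg_b by (simp add: avd_beats_def)
    thus ?thesis using 2 nodes by auto
  next
    case 3
    have "indeg (agents n - {a, k, t}) x k
            \<le> indeg (agents n - {a, b, k}) x k + card ((agents n - {a, k, t}) - (agents n - {a, b, k}))"
      by (rule indeg_le_add_card_diff) auto
    also have "card ((agents n - {a, k, t}) - (agents n - {a, b, k})) \<le> card {b}"
      by (rule card_mono) auto
    finally have k_votes: "indeg (agents n - {a, k, t}) x k \<le> L - 4"
      using tie_indeg_other[OF 3] L_ge_5 by simp
    have "indeg (agents n - {a, b, t}) x a
            \<le> indeg (agents n - {a, k, t}) x a + card ((agents n - {a, b, t}) - (agents n - {a, k, t}))"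
      by (rule indeg_le_add_card_diff) auto
    also have "card ((agents n - {a, b, t}) - (agents n - {a, k, t})) \<le> card {k}"
      by (rule card_mono) auto
    finally have a_votes: "L \<le> indeg (agents n - {a, k, t}) x a + 1"
      using tie_indeg_a by simp
    have "\<not> avd_beats n t x k a"
      using k_votes a_votes 3 nodes L_ge_5 by (simp add: avd_beats_def)
    thus ?thesis using 3 nodes by auto
  qed
qed

lemma tie_avd_eq_default: "avd n t x = t"
proof (cases "\<exists>k \<in> agents n. \<forall>j \<in> agents n - {k}. avd_beats n t x k j")
  case True
  then obtain k where k: "k \<in> agents n" "\<forall>j \<in> agents n - {k}. avd_beats n t x k j" by blast
  hence "k = t" using tie_no_other_winner by blast
  hence "(THE k. k \<in> agents n \<and> (\<forall>j \<in> agents n - {k}. avd_beats n t x k j)) = t"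
    using k tie_no_other_winner by (intro the_equality) blast+
  thus ?thesis using True by (simp add: avd_def)
next
  case False
  thus ?thesis unfolding avd_def by (simp only: if_False)
qed

lemma tie_avd_loss_ge: "real L - real T - 2 \<le> real (max_deg n x) - real (deg n x (avd n t x))"
  using tie_max_deg_ge tie_deg_default tie_avd_eq_default by simp

end

lemma tie_event_unique_le:
  assumes nodes: "t \<in> agents n" "a \<in> agents n" "b \<in> agents n" "a < b" "a \<noteq> t" "b \<noteq> t"
    and nodes': "a' \<in> agents n" "b' \<in> agents n" "a' < b'" "a' \<noteq> t" "b' \<noteq> t"
    and "5 \<le> L" "5 \<le> L'" "L \<le> L'"
    and "x \<in> tie_event n t a b L T" "x \<in> tie_event n t a' b' L' T"
  shows "a = a' \<and> b = b' \<and> L = L'"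
proof -
  note tie = nodes(1-3) less_imp_neq[OF nodes(4)] nodes(5,6) assms(12,15)
  note tie' = nodes(1) nodes'(1,2) less_imp_neq[OF nodes'(3)] nodes'(4,5) assms(13,16)
  have "a' \<in> {a, b}"
  proof (rule ccontr)
    assume "a' \<notin> {a, b}"
    hence "deg n x a' + 3 \<le> L" using nodes' by (intro tie_deg_other[OF tie]) auto
    thus False using tie_deg_a[OF tie'] \<open>L \<le> L'\<close> by simp
  qed
  moreover have "b' \<in> {a, b}"
  proof (rule ccontr)
    assume "b' \<notin> {a, b}"
    hence "deg n x b' + 3 \<le> L" using nodes' by (intro tie_deg_other[OF tie]) auto
    thus False using tie_deg_b[OF tie'] \<open>L \<le> L'\<close> by simp
  qed
  ultimately have "a = a'" "b = b'" using nodes nodes' by auto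
  thus ?thesis using tie_indeg_a[OF tie] tie_indeg_a[OF tie'] by simp
qed

lemma tie_event_unique:
  assumes "t \<in> agents n" "a \<in> agents n" "b \<in> agents n" "a < b" "a \<noteq> t" "b \<noteq> t"
    and "a' \<in> agents n" "b' \<in> agents n" "a' < b'" "a' \<noteq> t" "b' \<noteq> t"
    and "5 \<le> L" "5 \<le> L'"
    and "x \<in> tie_event n t a b L T" "x \<in> tie_event n t a' b' L' T"
  shows "a = a' \<and> b = b' \<and> L = L'"
  using tie_event_unique_le[OF assms(1-13) _ assms(14,15)]
    tie_event_unique_le[OF assms(1,7-11,2-6,13,12) _ assms(15,14)]
  by (cases "L \<le> L'") auto

section \<open>Independent in-degree counts\<close>

text \<open>Unlike \<open>measure_pmf_prob_product\<close>, this needs no countability of \<open>A\<close> and \<open>B\<close>.\<close>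

lemma measure_pmf_prob_pair_Times:
  "measure_pmf.prob (pair_pmf M N) (A \<times> B) = measure_pmf.prob M A * measure_pmf.prob N B"
proof -
  have "measure_pmf.prob (pair_pmf M N) (A \<times> B)
          = measure_pmf.prob (pair_pmf M N) ((A \<times> B) \<inter> set_pmf (pair_pmf M N))"
    by (rule measure_Int_set_pmf[symmetric])
  also have "(A \<times> B) \<inter> set_pmf (pair_pmf M N) = (A \<inter> set_pmf M) \<times> (B \<inter> set_pmf N)" by auto
  also have "measure_pmf.prob (pair_pmf M N) \<dots>
               = measure_pmf.prob M (A \<inter> set_pmf M) * measure_pmf.prob N (B \<inter> set_pmf N)"
    by (rule measure_pmf_prob_product) auto
  finally show ?thesis by (simp add: measure_Int_set_pmf)
qed

lemma prob_Pi_pmf_disjoint_blocks: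
  assumes "finite V" "finite S" "\<forall>v\<in>V. B v \<subseteq> S" "disjoint_family_on B V"
    and "\<forall>v\<in>V. \<forall>f g. (\<forall>e\<in>B v. f e = g e) \<longrightarrow> P v f = P v g"
  shows "measure_pmf.prob (Pi_pmf S d q) {f. \<forall>v\<in>V. P v f} =
         (\<Prod>v\<in>V. measure_pmf.prob (Pi_pmf (B v) d q) {f. P v f})"
  using assms
proof (induction V arbitrary: S rule: finite_induct)
  case empty
  then show ?case by simp
next
  case (insert w V)
  let ?merge = "\<lambda>(f, g) e. if e \<in> B w then f e else g e"
  have "finite (B w)" using insert.prems finite_subset by auto
  moreover have "S = B w \<union> (S - B w)" using insert.prems by auto
  ultimately have split: "Pi_pmf S d q = map_pmf ?merge (pair_pmf (Pi_pmf (B w) d q) (Pi_pmf (S - B w) d q))"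
    using Pi_pmf_union[of "B w" "S - B w" d q] insert.prems by auto
  have rest: "\<forall>v\<in>V. B v \<subseteq> S - B w"
    using insert.prems insert.hyps unfolding disjoint_family_on_def by fastforce
  have merge_w: "P w (?merge (f, g)) = P w f" for f g
    by (intro insert.prems(4)[rule_format]) auto
  have merge_V: "v \<in> V \<Longrightarrow> P v (?merge (f, g)) = P v g" for f g v
    using rest by (intro insert.prems(4)[rule_format]) auto
  have "?merge -` {f. \<forall>v\<in>insert w V. P v f} = {f. P w f} \<times> {g. \<forall>v\<in>V. P v g}"
  proof (rule set_eqI)
    fix z
    show "z \<in> ?merge -` {f. \<forall>v\<in>insert w V. P v f} \<longleftrightarrow> z \<in> {f. P w f} \<times> {g. \<forall>v\<in>V. P v g}"
      using merge_w[of "fst z" "snd z"] merge_V[of _ "fst z" "snd z"] by (cases z) auto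
  qed
  hence "measure_pmf.prob (Pi_pmf S d q) {f. \<forall>v\<in>insert w V. P v f} =
        measure_pmf.prob (Pi_pmf (B w) d q) {f. P w f} *
        measure_pmf.prob (Pi_pmf (S - B w) d q) {g. \<forall>v\<in>V. P v g}"
    unfolding split measure_map_pmf by (simp add: measure_pmf_prob_pair_Times)
  also have "measure_pmf.prob (Pi_pmf (S - B w) d q) {g. \<forall>v\<in>V. P v g} =
               (\<Prod>v\<in>V. measure_pmf.prob (Pi_pmf (B v) d q) {f. P v f})"
    using insert.prems rest by (intro insert.IH) (auto simp: disjoint_family_on_def)
  finally show ?case using insert.hyps by simp
qed

lemma finite_possible_edges: "finite (possible_edges n)"
  unfolding possible_edges_def by (rule finite_subset[of _ "agents n \<times> agents n"]) auto

lemma prob_Pi_pmf_in_degree_binomial: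
  fixes A :: "'a set" and v :: 'a
  assumes "finite A" "p \<in> {0..1}"
  shows "measure_pmf.prob (Pi_pmf ((\<lambda>i. (i, v)) ` A) False (\<lambda>_. bernoulli_pmf p))
           {f. card {i \<in> A. f (i, v)} \<in> X} = measure_pmf.prob (binomial_pmf (card A) p) X"
proof -
  let ?B = "(\<lambda>i. (i, v)) ` A"
  have inj: "inj_on (\<lambda>i. (i, v)) A" by (auto simp: inj_on_def)
  have "binomial_pmf (card A) p = map_pmf (\<lambda>f. card {e \<in> ?B. f e}) (Pi_pmf ?B False (\<lambda>_. bernoulli_pmf p))"
    by (rule binomial_pmf_altdef') (use assms card_image[OF inj] in auto)
  moreover have "card {e \<in> ?B. f e} = card {i \<in> A. f (i, v)}" for f :: "'a \<times> 'a \<Rightarrow> bool"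
  proof -
    have "{e \<in> ?B. f e} = (\<lambda>i. (i, v)) ` {i \<in> A. f (i, v)}" by auto
    thus ?thesis using inj by (simp add: card_image inj_on_subset)
  qed
  ultimately show ?thesis by (simp add: vimage_def)
qed

lemma prob_uniform_model_indeg:
  assumes "p \<in> {0..1}" and "\<forall>v\<in>agents n. S v \<subseteq> agents n - {v}"
  shows "measure_pmf.prob (uniform_model n p) {x. \<forall>v\<in>agents n. indeg (S v) x v \<in> X v} =
         (\<Prod>v\<in>agents n. measure_pmf.prob (binomial_pmf (card (S v)) p) (X v))"
proof -
  let ?B = "\<lambda>v. (\<lambda>i. (i, v)) ` S v"
  have "\<forall>v\<in>agents n. ?B v \<subseteq> possible_edges n"
    using assms(2) by (auto simp: possible_edges_def)
  moreover have "\<forall>v\<in>agents n. \<forall>f g. (\<forall>e\<in>?B v. f e = g e) \<longrightarrow>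
                   (card {i \<in> S v. f (i, v)} \<in> X v) = (card {i \<in> S v. g (i, v)} \<in> X v)"
  proof (intro ballI allI impI)
    fix v and f g :: "nat \<times> nat \<Rightarrow> bool"
    assume "\<forall>e\<in>?B v. f e = g e"
    hence "{i \<in> S v. f (i, v)} = {i \<in> S v. g (i, v)}" by auto
    thus "(card {i \<in> S v. f (i, v)} \<in> X v) = (card {i \<in> S v. g (i, v)} \<in> X v)" by simp
  qed
  ultimately have "measure_pmf.prob (Pi_pmf (possible_edges n) False (\<lambda>_. bernoulli_pmf p))
                     {f. \<forall>v\<in>agents n. card {i \<in> S v. f (i, v)} \<in> X v} =
                   (\<Prod>v\<in>agents n. measure_pmf.prob (Pi_pmf (?B v) False (\<lambda>_. bernoulli_pmf p))
                     {f. card {i \<in> S v. f (i, v)} \<in> X v})"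
    by (intro prob_Pi_pmf_disjoint_blocks) (auto simp: disjoint_family_on_def finite_possible_edges)
  also have "\<dots> = (\<Prod>v\<in>agents n. measure_pmf.prob (binomial_pmf (card (S v)) p) (X v))"
  proof (rule prod.cong[OF refl])
    fix v assume "v \<in> agents n"
    hence "finite (S v)" using assms(2) finite_subset[of "S v" "agents n"] by auto
    thus "measure_pmf.prob (Pi_pmf (?B v) False (\<lambda>_. bernoulli_pmf p)) {f. card {i \<in> S v. f (i, v)} \<in> X v} =
          measure_pmf.prob (binomial_pmf (card (S v)) p) (X v)"
      by (rule prob_Pi_pmf_in_degree_binomial[OF _ assms(1)])
  qed
  finally show ?thesis
    unfolding uniform_model_def measure_map_pmf by (simp add: indeg_def)
qed

lemma finite_set_pmf_uniform_model: "finite (set_pmf (uniform_model n p))"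
  unfolding uniform_model_def by (auto simp: set_Pi_pmf finite_possible_edges intro!: finite_PiE_dflt)

section \<open>Estimates for \<open>Bin(m, 1/2)\<close>\<close>

definition bin_half :: "nat \<Rightarrow> nat \<Rightarrow> real" where
  "bin_half m j = real (m choose j) / 2 ^ m"

definition bin_half_cdf :: "nat \<Rightarrow> nat \<Rightarrow> real" where
  "bin_half_cdf m j = (\<Sum>i\<le>j. bin_half m i)"

definition bin_half_tail :: "nat \<Rightarrow> nat \<Rightarrow> real" where
  "bin_half_tail m j = (\<Sum>i\<in>{j..m}. bin_half m i)"

lemma pmf_binomial_half: "pmf (binomial_pmf m (1/2)) j = bin_half m j"
proof (cases "j \<le> m")
  case True
  have "(1/2::real) ^ j * (1/2) ^ (m - j) = 1 / 2 ^ m"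
    using True by (simp add: power_add[symmetric] power_one_over)
  thus ?thesis by (simp add: bin_half_def mult.assoc)
next
  case False
  thus ?thesis by (simp add: bin_half_def binomial_eq_0)
qed

lemma prob_binomial_half_atMost: "measure_pmf.prob (binomial_pmf m (1/2)) {..j} = bin_half_cdf m j"
  by (simp add: measure_measure_pmf_finite pmf_binomial_half bin_half_cdf_def)

lemma prob_binomial_half_singleton: "measure_pmf.prob (binomial_pmf m (1/2)) {j} = bin_half m j"
  by (simp add: measure_pmf_single pmf_binomial_half)

lemma bin_half_nonneg: "0 \<le> bin_half m j"
  by (simp add: bin_half_def)

lemma bin_half_eq_0: "m < j \<Longrightarrow> bin_half m j = 0"
  by (simp add: bin_half_def)

lemma bin_half_Suc:
  assumes "j < m"
  shows "bin_half m (Suc j) = bin_half m j * (real m - real j) / (real j + 1)"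
proof -
  obtain m' where m: "m = Suc m'" using assms by (cases m) auto
  have "(m - j) * (m choose j) = m * (m' choose j)" using binomial_absorb_comp[of m j] m by simp
  moreover have "Suc j * (m choose Suc j) = m * (m' choose j)" using Suc_times_binomial[of j m'] m by simp
  ultimately have "real (Suc j) * real (m choose Suc j) = real (m - j) * real (m choose j)"
    by (metis of_nat_mult)
  hence "(real j + 1) * real (m choose Suc j) = (real m - real j) * real (m choose j)"
    using assms by (simp add: of_nat_diff add.commute)
  hence "real (m choose Suc j) = (real m - real j) * real (m choose j) / (real j + 1)"
    by (simp add: field_simps)
  thus ?thesis unfolding bin_half_def by (simp add: mult_ac)
qed

lemma sum_bin_half: "(\<Sum>i\<le>m. bin_half m i) = 1"
proof -
  have "(\<Sum>i\<le>m. real (m choose i)) = 2 ^ m"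
    using choose_row_sum[of m] by (metis of_nat_numeral of_nat_power of_nat_sum)
  thus ?thesis by (simp add: bin_half_def flip: sum_divide_distrib)
qed

lemma bin_half_center_ge: "1 / (real m + 1) \<le> bin_half m (m div 2)"
proof -
  have "1 = (\<Sum>i\<le>m. bin_half m i)" using sum_bin_half by simp
  also have "\<dots> \<le> (\<Sum>i\<le>m. bin_half m (m div 2))"
    by (intro sum_mono) (simp add: bin_half_def divide_right_mono binomial_maximum)
  also have "\<dots> = (real m + 1) * bin_half m (m div 2)" by simp
  finally show ?thesis by (simp add: field_simps)
qed

lemma bin_half_ge_ratio_pow:
  assumes "D \<le> L" "L \<le> m"
  shows "bin_half m D * ((real m - real L) / (real L + 1)) ^ (L - D) \<le> bin_half m L"
  using assms
proof (induction L rule: dec_induct)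
  case base
  thus ?case by simp
next
  case (step L)
  let ?r = "\<lambda>L. (real m - real L) / (real L + 1)"
  have r: "0 \<le> ?r (Suc L)" "?r (Suc L) \<le> ?r L" using step by (auto intro: frac_le)
  have "bin_half m D * ?r (Suc L) ^ (Suc L - D) = bin_half m D * ?r (Suc L) ^ (L - D) * ?r (Suc L)"
    using step by (simp add: Suc_diff_le)
  also have "\<dots> \<le> bin_half m D * ?r L ^ (L - D) * ?r L"
    using r bin_half_nonneg[of m D] by (intro mult_mono mult_left_mono power_mono) auto
  also have "\<dots> \<le> bin_half m L * ?r L"
    using step r by (intro mult_right_mono) auto
  also have "\<dots> = bin_half m (Suc L)" using bin_half_Suc[of L m] step by simp
  finally show ?case .
qed

lemma bin_half_le_ratio_pow:
  assumes "D \<le> m"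
  shows "bin_half m (D + k) \<le> bin_half m D * ((real m - real D) / (real D + 1)) ^ k"
proof (induction k)
  case 0
  then show ?case by simp
next
  case (Suc k)
  let ?r = "(real m - real D) / (real D + 1)"
  have r: "0 \<le> ?r" using assms by auto
  show ?case
  proof (cases "D + k < m")
    case True
    have "bin_half m (D + Suc k) = bin_half m (D + k) * ((real m - real (D + k)) / (real (D + k) + 1))"
      using bin_half_Suc[OF True] by simp
    also have "\<dots> \<le> bin_half m (D + k) * ?r"
      using bin_half_nonneg[of m "D + k"] True by (intro mult_left_mono frac_le) auto
    also have "\<dots> \<le> bin_half m D * ?r ^ k * ?r" by (intro mult_right_mono Suc.IH r)
    finally show ?thesis by (simp only: power_Suc2 mult.assoc)
  next
    case False
    hence "bin_half m (D + Suc k) = 0" by (intro bin_half_eq_0) auto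
    thus ?thesis using r bin_half_nonneg[of m D] by (metis mult_nonneg_nonneg zero_le_power)
  qed
qed

lemma bin_half_antimono:
  assumes "real m \<le> 2 * real i + 1" "i \<le> i'"
  shows "bin_half m i' \<le> bin_half m i"
proof (cases "i \<le> m")
  case True
  have "bin_half m (i + (i' - i)) \<le> bin_half m i * ((real m - real i) / (real i + 1)) ^ (i' - i)"
    by (rule bin_half_le_ratio_pow[OF True])
  also have "\<dots> \<le> bin_half m i"
    using assms True bin_half_nonneg[of m i]
    by (intro mult_left_le power_le_one) (auto simp: divide_simps)
  finally show ?thesis using assms by simp
next
  case False
  thus ?thesis using assms by (simp add: bin_half_eq_0)
qed

lemma bin_half_tail_antimono: "j \<le> j' \<Longrightarrow> bin_half_tail m j' \<le> bin_half_tail m j"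
  unfolding bin_half_tail_def by (intro sum_mono2) (auto simp: bin_half_nonneg)

lemma bin_half_tail_le_geometric:
  assumes "D \<le> m" "real m < 2 * real D + 1"
  shows "bin_half_tail m D \<le> bin_half m D * (real D + 1) / (2 * real D + 1 - real m)"
proof -
  let ?r = "(real m - real D) / (real D + 1)"
  have r: "0 \<le> ?r" "?r < 1" using assms by (auto simp: divide_simps)
  have "bin_half_tail m D = (\<Sum>k<Suc (m - D). bin_half m (D + k))"
    unfolding bin_half_tail_def
    by (rule sum.reindex_bij_witness[of _ "\<lambda>k. D + k" "\<lambda>i. i - D"]) (use assms in auto)
  also have "\<dots> \<le> (\<Sum>k<Suc (m - D). bin_half m D * ?r ^ k)"
    by (intro sum_mono bin_half_le_ratio_pow assms)
  also have "\<dots> = bin_half m D * (\<Sum>k<Suc (m - D). ?r ^ k)"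
    by (rule sum_distrib_left[symmetric])
  also have "\<dots> \<le> bin_half m D * (1 / (1 - ?r))"
  proof -
    have "(\<Sum>k<Suc (m - D). ?r ^ k) = (1 - ?r ^ Suc (m - D)) / (1 - ?r)"
      using r by (subst sum_gp_strict) auto
    also have "\<dots> \<le> 1 / (1 - ?r)"
      using r zero_le_power[OF r(1), of "Suc (m - D)"] by (intro divide_right_mono) auto
    finally show ?thesis using bin_half_nonneg by (intro mult_left_mono)
  qed
  also have "1 - ?r = (2 * real D + 1 - real m) / (real D + 1)" by (simp add: field_simps)
  finally show ?thesis by simp
qed

lemma bin_half_tail_ge:
  assumes "j + h \<le> m" "real m \<le> 2 * real j + 1"
  shows "real h * bin_half m (j + h) \<le> bin_half_tail m j"
proof -
  have "real h * bin_half m (j + h) = (\<Sum>i\<in>{j..<j + h}. bin_half m (j + h))" by simp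
  also have "\<dots> \<le> (\<Sum>i\<in>{j..<j + h}. bin_half m i)"
    by (intro sum_mono bin_half_antimono) (use assms in auto)
  also have "\<dots> \<le> bin_half_tail m j"
    unfolding bin_half_tail_def by (intro sum_mono2) (use assms bin_half_nonneg in auto)
  finally show ?thesis .
qed

lemma bin_half_cdf_ge: "1 - bin_half_tail m (Suc j) \<le> bin_half_cdf m j"
proof -
  have "1 = (\<Sum>i\<le>m. bin_half m i)" using sum_bin_half by simp
  also have "\<dots> \<le> (\<Sum>i\<in>{..j} \<union> {Suc j..m}. bin_half m i)"
    by (intro sum_mono2) (auto simp: bin_half_nonneg)
  also have "\<dots> = bin_half_cdf m j + bin_half_tail m (Suc j)"
    unfolding bin_half_cdf_def bin_half_tail_def by (rule sum.union_disjoint) auto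
  finally show ?thesis by simp
qed

lemma bin_half_tail_hoeffding:
  assumes "0 < m" "0 \<le> \<epsilon>" "real m / 2 + \<epsilon> \<le> real j"
  shows "bin_half_tail m j \<le> exp (- 2 * \<epsilon>\<^sup>2 / real m)"
proof -
  interpret binomial_distribution m "1/2" by unfold_locales auto
  have "bin_half_tail m j = measure_pmf.prob (binomial_pmf m (1/2)) {j..m}"
    unfolding bin_half_tail_def by (simp add: measure_measure_pmf_finite pmf_binomial_half)
  also have "\<dots> \<le> measure_pmf.prob (binomial_pmf m (1/2)) {x. real m * (1/2) + \<epsilon> \<le> real x}"
    using assms by (intro measure_pmf.finite_measure_mono) auto
  also have "\<dots> \<le> exp (- 2 * \<epsilon>\<^sup>2 / real m)" by (rule prob_ge[OF assms(1,2)])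
  finally show ?thesis .
qed

lemma bin_half_cdf_above_center_ge:
  assumes "0 < m"
  shows "1/2 \<le> bin_half_cdf m (nat \<lfloor>real m / 2 + sqrt (real m)\<rfloor>)"
proof -
  define T where "T = nat \<lfloor>real m / 2 + sqrt (real m)\<rfloor>"
  have "real m / 2 + sqrt (real m) \<le> real (Suc T)" unfolding T_def by linarith
  hence "bin_half_tail m (Suc T) \<le> exp (- 2 * (sqrt (real m))\<^sup>2 / real m)"
    using assms by (intro bin_half_tail_hoeffding) auto
  also have "\<dots> = exp (- 2)" using assms by simp
  also have "exp (- 2 :: real) \<le> 1/2"
    using exp_ge_add_one_self_aux[of "2::real"] by (simp add: exp_minus field_simps)
  finally show ?thesis using bin_half_cdf_ge[of m T] unfolding T_def by linarith
qed

lemma bin_half_cdf_pow_ge_half: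
  assumes "0 < m" "real m * bin_half_tail m (Suc j) \<le> 1/2"
  shows "1/2 \<le> bin_half_cdf m j ^ m"
proof -
  have "1 + real m * (- 1 / (2 * real m)) \<le> (1 + (- 1 / (2 * real m))) ^ m"
    using assms by (intro Bernoulli_inequality) auto
  also have "\<dots> \<le> bin_half_cdf m j ^ m"
  proof -
    have "bin_half_tail m (Suc j) \<le> 1 / (2 * real m)"
      using assms by (simp add: field_simps)
    hence "1 + (- 1 / (2 * real m)) \<le> bin_half_cdf m j"
      using bin_half_cdf_ge[of m j] by simp
    thus ?thesis using assms by (intro power_mono) (auto simp: field_simps)
  qed
  finally show ?thesis using assms by simp
qed

lemma one_minus_pow_ge_exp:
  fixes x :: real
  assumes "0 \<le> x" "x \<le> 1/2" "real k \<le> B"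
  shows "exp (- 2 * x * B) \<le> (1 - x) ^ k"
proof -
  have "- x - 2 * x\<^sup>2 \<le> ln (1 - x)"
    by (rule ln_one_minus_pos_lower_bound) (use assms in auto)
  moreover have "x * (2 * x) \<le> x * 1" using assms by (intro mult_left_mono) auto
  ultimately have ln_ge: "- 2 * x \<le> ln (1 - x)" by (simp add: power2_eq_square)
  have "x * real k \<le> x * B" using assms by (intro mult_left_mono) auto
  hence "- 2 * x * B \<le> real k * (- 2 * x)" by (simp add: algebra_simps)
  also have "\<dots> \<le> real k * ln (1 - x)" using ln_ge by (intro mult_left_mono) auto
  finally have "exp (- 2 * x * B) \<le> exp (real k * ln (1 - x))" by simp
  also have "\<dots> = (1 - x) ^ k" using assms by (simp add: exp_of_nat_mult)
  finally show ?thesis .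
qed

lemma bin_half_ge_pow:
  assumes "D \<le> L" "L \<le> m" "0 < m" "real m \<le> 2 * real L + 1"
    and "2 * (2 * real L + 1 - real m) / real m \<le> x" "x \<le> 1"
  shows "bin_half m D * (1 - x) ^ (L - D) \<le> bin_half m L"
proof -
  define M where "M = real m"
  have M: "0 < M" using assms by (simp add: M_def)
  have "0 \<le> 2 * (2 * real L + 1 - M) / M" using assms M by (simp add: M_def)
  hence "0 \<le> x" using assms(5) unfolding M_def by linarith
  have "2 * real L + 1 - M = 2 * (2 * real L + 1 - M) / M * (M / 2)"
    using M by simp
  also have "\<dots> \<le> x * (real L + 1)"
    using assms M \<open>0 \<le> x\<close> by (intro mult_mono) (auto simp: M_def)
  finally have "1 - x \<le> (M - real L) / (real L + 1)"
    by (simp add: field_simps)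
  hence "(1 - x) ^ (L - D) \<le> ((M - real L) / (real L + 1)) ^ (L - D)"
    using assms by (intro power_mono) auto
  hence "bin_half m D * (1 - x) ^ (L - D) \<le> bin_half m D * ((M - real L) / (real L + 1)) ^ (L - D)"
    using bin_half_nonneg by (intro mult_left_mono)
  also have "\<dots> \<le> bin_half m L"
    unfolding M_def by (rule bin_half_ge_ratio_pow[OF assms(1,2)])
  finally show ?thesis .
qed

lemma bin_half_ge_half_of_close:
  assumes "D \<le> L" "L \<le> m" "0 < m" "real m \<le> 2 * real L + 1"
    and close: "real (L - D) * (2 * (2 * real L + 1 - real m) / real m) \<le> 1/2"
  shows "bin_half m D / 2 \<le> bin_half m L"
proof (cases "L = D")
  case True
  thus ?thesis using bin_half_nonneg[of m L] by simp
next
  case False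
  define y where "y = 2 * (2 * real L + 1 - real m) / real m"
  have y: "0 \<le> y" using assms by (simp add: y_def)
  have "1 * y \<le> real (L - D) * y" using False assms y by (intro mult_right_mono) auto
  moreover have "real (L - D) * y \<le> 1/2" using close by (simp only: y_def)
  ultimately have "y \<le> 1" by linarith
  have "1/2 \<le> 1 + real (L - D) * (- y)" using \<open>real (L - D) * y \<le> 1/2\<close> by simp
  also have "\<dots> \<le> (1 + (- y)) ^ (L - D)" using \<open>y \<le> 1\<close> by (intro Bernoulli_inequality) auto
  finally have "bin_half m D * (1/2) \<le> bin_half m D * (1 - y) ^ (L - D)"
    using bin_half_nonneg by (intro mult_left_mono) auto
  also have "\<dots> \<le> bin_half m L"
    using assms y \<open>y \<le> 1\<close> by (intro bin_half_ge_pow) (auto simp: y_def)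
  finally show ?thesis by simp
qed

lemma bin_half_ge_of_tail:
  assumes "D \<le> m" "real m < 2 * real D + 1" "1/2 < real m * bin_half_tail m D"
  shows "(real D - real m / 2) / (real m * (real m + 1)) \<le> bin_half m D"
proof -
  define M where "M = real m"
  have M: "0 < M" using assms by (auto simp: M_def intro: ccontr)
  have pos: "0 < 2 * real D + 1 - M" using assms by (simp add: M_def)
  have "1 / (2 * M) < bin_half_tail m D" using assms M by (simp add: M_def field_simps)
  also have "\<dots> \<le> bin_half m D * (real D + 1) / (2 * real D + 1 - M)"
    unfolding M_def by (rule bin_half_tail_le_geometric[OF assms(1,2)])
  finally have "1 / (2 * M) * (2 * real D + 1 - M) < bin_half m D * (real D + 1)"
    using pos by (simp add: less_divide_eq)
  hence "1 / (2 * M) * (2 * real D + 1 - M) / (real D + 1) < bin_half m D * (real D + 1) / (real D + 1)"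
    by (intro divide_strict_right_mono) auto
  hence "(2 * real D + 1 - M) / (2 * M * (real D + 1)) < bin_half m D"
    by simp
  moreover have "(2 * real D - M) / (2 * M * (M + 1)) \<le> (2 * real D + 1 - M) / (2 * M * (real D + 1))"
    using assms pos M by (intro frac_le) (auto simp: M_def)
  moreover have "(real D - M / 2) / (M * (M + 1)) = (2 * real D - M) / (2 * M * (M + 1))"
    using M by (simp add: field_simps)
  ultimately show ?thesis by (simp add: M_def)
qed

lemma bin_half_tail_beyond_center:
  fixes m :: nat and t :: real
  defines "B \<equiv> t + sqrt (real m) + 1"
  assumes "0 < m" "0 \<le> t" and small: "4 * (2 * B + 1) \<le> real m"
    and large: "1/2 < real m * sqrt (real m) / (real m + 1) * exp (- 4 * B * (2 * B + 1) / real m)"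
  shows "1/2 < real m * bin_half_tail m (m div 2 + nat \<lfloor>t\<rfloor>)"
proof -
  define M s j h where "M = real m" and "s = sqrt M"
    and "j = m div 2 + nat \<lfloor>t\<rfloor>" and "h = nat \<lceil>s\<rceil>"
  define x where "x = 2 * (2 * B + 1) / M"
  have M: "1 \<le> M" using assms by (simp add: M_def)
  have s: "1 \<le> s" "s \<le> real h" "real h \<le> s + 1" using M by (auto simp: s_def h_def)
  have center: "M \<le> 2 * real (m div 2) + 1" "2 * real (m div 2) \<le> M" unfolding M_def by linarith+
  define k where "k = nat \<lfloor>t\<rfloor> + h"
  have jh: "j + h = m div 2 + k" by (simp add: j_def k_def)
  have "real (nat \<lfloor>t\<rfloor>) \<le> t" using assms by simp
  hence dist: "real k \<le> B"
    using s(3) unfolding B_def s_def M_def k_def by simp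
  have B: "2 \<le> B" using s(1) assms(3) unfolding B_def s_def M_def by linarith
  have L_le: "2 * real (j + h) \<le> M + 2 * B" using center dist jh by simp
  have x: "0 \<le> x" "x \<le> 1/2" using small M B by (auto simp: x_def M_def field_simps)
  have "j + h \<le> m" using L_le small by (simp add: M_def)
  have "1 / (M + 1) * exp (- 2 * x * B) \<le> bin_half m (m div 2) * (1 - x) ^ (j + h - m div 2)"
    using bin_half_center_ge[of m] one_minus_pow_ge_exp[OF x dist] jh
    by (intro mult_mono) (auto simp: M_def bin_half_nonneg)
  also have "\<dots> \<le> bin_half m (j + h)"
  proof -
    have "2 * (2 * real (j + h) + 1 - real m) / real m \<le> x"
      using L_le M by (simp add: x_def M_def divide_right_mono)
    moreover have "real m \<le> 2 * real (j + h) + 1" using center jh by (simp add: M_def)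
    ultimately show ?thesis
      using \<open>j + h \<le> m\<close> assms x jh by (intro bin_half_ge_pow) auto
  qed
  finally have "s * (1 / (M + 1) * exp (- 2 * x * B)) \<le> real h * bin_half m (j + h)"
    using s M by (intro mult_mono) (auto simp: bin_half_nonneg)
  also have "\<dots> \<le> bin_half_tail m j"
    using \<open>j + h \<le> m\<close> center by (intro bin_half_tail_ge) (auto simp: j_def M_def)
  finally have "M * (s * (1 / (M + 1) * exp (- 2 * x * B))) \<le> M * bin_half_tail m j"
    using M by (intro mult_left_mono) auto
  hence "M * s / (M + 1) * exp (- 2 * x * B) \<le> M * bin_half_tail m j" by simp
  moreover have "- 2 * x * B = - 4 * B * (2 * B + 1) / M" by (simp add: x_def field_simps)
  ultimately have "M * s / (M + 1) * exp (- 4 * B * (2 * B + 1) / M) \<le> M * bin_half_tail m j"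
    by (simp only:)
  thus ?thesis using large unfolding M_def s_def j_def by linarith
qed

section \<open>Expected loss on tie events\<close>

lemma prob_tie_event:
  assumes "t \<in> agents n" "a \<in> agents n" "b \<in> agents n" "a \<noteq> b" "a \<noteq> t" "b \<noteq> t"
    and "n = m + 2"
  shows "measure_pmf.prob (uniform_model n (1/2)) (tie_event n t a b L T) =
         bin_half m L ^ 2 * bin_half_cdf m T * bin_half_cdf m (L - 5) ^ m"
proof -
  let ?P = "\<lambda>X. measure_pmf.prob (binomial_pmf m (1/2)) X"
  let ?R = "agents n - {a, b, t}"
  have card_rest: "card (agents n - {a, b, v}) = m" if "v \<in> agents n" "v \<noteq> a" "v \<noteq> b" for v
    using assms that by (subst card_Diff_subset) (auto simp: card_insert_if)
  have "measure_pmf.prob (uniform_model n (1/2)) (tie_event n t a b L T) =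
        (\<Prod>v\<in>agents n. measure_pmf.prob (binomial_pmf (card (tie_sources n t a b v)) (1/2))
                          (tie_counts t a b L T v))"
    unfolding tie_event_def by (rule prob_uniform_model_indeg) (auto simp: tie_sources_def)
  also have "\<dots> = (\<Prod>v\<in>agents n. ?P (tie_counts t a b L T v))"
    using assms card_rest by (intro prod.cong) (auto simp: tie_sources_def)
  also have "agents n = insert a (insert b (insert t ?R))"
    using assms by auto
  also have "(\<Prod>v\<in>insert a (insert b (insert t ?R)). ?P (tie_counts t a b L T v)) =
             ?P {L} * (?P {L} * (?P {..T} * (\<Prod>v\<in>?R. ?P (tie_counts t a b L T v))))"
    using assms by (simp add: tie_counts_def)
  also have "(\<Prod>v\<in>?R. ?P (tie_counts t a b L T v)) = (\<Prod>v\<in>?R. ?P {..L - 5})"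
    by (rule prod.cong) (auto simp: tie_counts_def)
  also have "\<dots> = ?P {..L - 5} ^ m"
    using card_rest[of t] assms by simp
  finally show ?thesis
    by (simp add: prob_binomial_half_singleton prob_binomial_half_atMost power2_eq_square)
qed

definition nondefault_pairs :: "nat \<Rightarrow> nat \<Rightarrow> (nat \<times> nat) set" where
  "nondefault_pairs n t = {(a, b). a \<in> agents n - {t} \<and> b \<in> agents n - {t} \<and> a < b}"

lemma finite_nondefault_pairs: "finite (nondefault_pairs n t)"
  unfolding nondefault_pairs_def by (rule finite_subset[of _ "agents n \<times> agents n"]) auto

lemma card_nondefault_pairs_ge:
  assumes "t \<in> agents n"
  shows "real n * (real n - 1) \<le> 2 * real (card (nondefault_pairs n t))"
proof -
  let ?A = "agents n - {t}"
  have card_A: "card ?A = n" using assms by simp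
  have "?A \<times> ?A - Id_on ?A \<subseteq> nondefault_pairs n t \<union> prod.swap ` nondefault_pairs n t"
    by (auto simp: nondefault_pairs_def image_iff Id_on_def)
  hence "card (?A \<times> ?A - Id_on ?A) \<le> card (nondefault_pairs n t \<union> prod.swap ` nondefault_pairs n t)"
    by (intro card_mono) (auto intro: finite_nondefault_pairs)
  also have "\<dots> \<le> card (nondefault_pairs n t) + card (prod.swap ` nondefault_pairs n t)"
    by (rule card_Un_le)
  also have "card (prod.swap ` nondefault_pairs n t) \<le> card (nondefault_pairs n t)"
    by (rule card_image_le[OF finite_nondefault_pairs])
  also have "card (?A \<times> ?A - Id_on ?A) = n * n - n"
  proof -
    have "Id_on ?A = (\<lambda>a. (a, a)) ` ?A" by (auto simp: Id_on_def)
    hence "card (Id_on ?A) = n" using card_A by (simp add: card_image inj_on_def)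
    moreover have "Id_on ?A \<subseteq> ?A \<times> ?A" by auto
    moreover have "finite (Id_on ?A)" by (rule finite_subset[of _ "?A \<times> ?A"]) auto
    ultimately show ?thesis using card_A by (simp add: card_Diff_subset card_cartesian_product)
  qed
  finally have "n * n - n \<le> 2 * card (nondefault_pairs n t)" by simp
  hence "real (n * n - n) \<le> 2 * real (card (nondefault_pairs n t))" by linarith
  moreover have "real (n * n - n) = real n * (real n - 1)"
    by (cases n) (auto simp: algebra_simps of_nat_diff)
  ultimately show ?thesis by simp
qed

lemma avd_loss_ge_sum_tie_indicators:
  assumes t: "t \<in> agents n" and W: "finite W" "\<forall>L\<in>W. 5 \<le> L"
  shows "(\<Sum>((a, b), L)\<in>nondefault_pairs n t \<times> W. (real L - real T - 2) * indicator (tie_event n t a b L T) x)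
           \<le> real (max_deg n x) - real (deg n x (avd n t x))"
proof (cases "\<exists>a b L. ((a, b), L) \<in> nondefault_pairs n t \<times> W \<and> x \<in> tie_event n t a b L T")
  case True
  then obtain a b L where i: "((a, b), L) \<in> nondefault_pairs n t \<times> W" "x \<in> tie_event n t a b L T"
    by blast
  have nodes: "a \<in> agents n" "b \<in> agents n" "a < b" "a \<noteq> t" "b \<noteq> t" "5 \<le> L"
    using i W by (auto simp: nondefault_pairs_def)
  have others: "x \<notin> tie_event n t a' b' L' T"
    if "((a', b'), L') \<in> nondefault_pairs n t \<times> W - {((a, b), L)}" for a' b' L'
  proof
    assume x_i: "x \<in> tie_event n t a' b' L' T"
    have "a' \<in> agents n" "b' \<in> agents n" "a' < b'" "a' \<noteq> t" "b' \<noteq> t" "5 \<le> L'"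
      using that W by (auto simp: nondefault_pairs_def)
    hence "a = a' \<and> b = b' \<and> L = L'"
      by (rule tie_event_unique[OF t nodes(1-5) _ _ _ _ _ nodes(6) _ i(2) x_i])
    thus False using that by simp
  qed
  have fin: "finite (nondefault_pairs n t \<times> W)" using finite_nondefault_pairs W by auto
  have "(\<Sum>((a, b), L)\<in>nondefault_pairs n t \<times> W. (real L - real T - 2) * indicator (tie_event n t a b L T) x)
          = real L - real T - 2"
    using i others by (subst sum.remove[OF fin i(1)]) (auto intro!: sum.neutral simp: indicator_def; blast)
  also have "\<dots> \<le> real (max_deg n x) - real (deg n x (avd n t x))"
    using i nodes by (intro tie_avd_loss_ge[OF t]) auto
  finally show ?thesis .
next
  case False
  hence "(\<Sum>((a, b), L)\<in>nondefault_pairs n t \<times> W. (real L - real T - 2) * indicator (tie_event n t a b L T) x) = 0"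
    by (auto intro!: sum.neutral)
  thus ?thesis using avd_loss_nonneg[OF t] by simp
qed

lemma expected_loss_ge_sum_tie_events:
  assumes "t \<in> agents n" "finite W" "\<forall>L\<in>W. 5 \<le> L"
  shows "(\<Sum>(a, b)\<in>nondefault_pairs n t. \<Sum>L\<in>W. (real L - real T - 2) *
            measure_pmf.prob (uniform_model n (1/2)) (tie_event n t a b L T))
         \<le> measure_pmf.expectation (uniform_model n (1/2))
             (\<lambda>x. real (max_deg n x) - real (deg n x (avd n t x)))"
proof -
  let ?M = "uniform_model n (1/2)"
  have int: "integrable ?M f" for f :: "(nat \<times> nat) set \<Rightarrow> real"
    by (rule integrable_measure_pmf_finite[OF finite_set_pmf_uniform_model])
  have "(\<Sum>((a, b), L)\<in>nondefault_pairs n t \<times> W. (real L - real T - 2) * measure_pmf.prob ?M (tie_event n t a b L T))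
          = measure_pmf.expectation ?M (\<lambda>x. \<Sum>((a, b), L)\<in>nondefault_pairs n t \<times> W.
              (real L - real T - 2) * indicator (tie_event n t a b L T) x)"
    by (subst Bochner_Integration.integral_sum) (auto intro: int simp: case_prod_unfold)
  also have "\<dots> \<le> measure_pmf.expectation ?M (\<lambda>x. real (max_deg n x) - real (deg n x (avd n t x)))"
    by (rule integral_mono[OF int int avd_loss_ge_sum_tie_indicators[OF assms]])
  finally show ?thesis
    by (simp add: sum.cartesian_product case_prod_unfold)
qed

lemma expected_loss_ge_window_sum:
  assumes "t \<in> agents n" "n = m + 2" "finite W" "\<forall>L\<in>W. 5 \<le> L"
  shows "real (card (nondefault_pairs n t)) * bin_half_cdf m T *
           (\<Sum>L\<in>W. (real L - real T - 2) * bin_half m L ^ 2 * bin_half_cdf m (L - 5) ^ m)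
         \<le> measure_pmf.expectation (uniform_model n (1/2))
             (\<lambda>x. real (max_deg n x) - real (deg n x (avd n t x)))"
proof -
  have "measure_pmf.prob (uniform_model n (1/2)) (tie_event n t a b L T) =
          bin_half m L ^ 2 * bin_half_cdf m T * bin_half_cdf m (L - 5) ^ m"
    if "(a, b) \<in> nondefault_pairs n t" for a b L
    using that assms by (intro prob_tie_event) (auto simp: nondefault_pairs_def)
  hence "(\<Sum>(a, b)\<in>nondefault_pairs n t. \<Sum>L\<in>W. (real L - real T - 2) *
            measure_pmf.prob (uniform_model n (1/2)) (tie_event n t a b L T))
       = real (card (nondefault_pairs n t)) * bin_half_cdf m T *
           (\<Sum>L\<in>W. (real L - real T - 2) * bin_half m L ^ 2 * bin_half_cdf m (L - 5) ^ m)"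
    by (simp add: case_prod_unfold sum_distrib_left mult_ac)
  thus ?thesis using expected_loss_ge_sum_tie_events[OF assms(1,3,4), of T] by linarith
qed

section \<open>The threshold window\<close>

definition threshold :: "nat \<Rightarrow> nat" where
  "threshold m = (LEAST j. real m * bin_half_tail m (Suc j) \<le> 1/2)"

lemma threshold_tail_Suc_le: "real m * bin_half_tail m (Suc (threshold m)) \<le> 1/2"
  unfolding threshold_def by (rule LeastI[of _ m]) (simp add: bin_half_tail_def)

lemma threshold_le: "threshold m \<le> m"
  unfolding threshold_def by (rule Least_le) (simp add: bin_half_tail_def)

lemma threshold_tail_gt:
  assumes "0 < m"
  shows "1/2 < real m * bin_half_tail m (threshold m)"
proof (cases "threshold m")
  case 0
  have "bin_half_tail m 0 = 1" using sum_bin_half by (simp add: bin_half_tail_def atLeast0AtMost)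
  thus ?thesis using 0 assms by simp
next
  case (Suc j)
  hence "\<not> real m * bin_half_tail m (Suc j) \<le> 1/2"
    unfolding threshold_def by (intro not_less_Least) (simp add: threshold_def)
  thus ?thesis using Suc by simp
qed

lemma le_threshold:
  assumes "1/2 < real m * bin_half_tail m j"
  shows "j \<le> threshold m"
proof (rule ccontr)
  assume "\<not> j \<le> threshold m"
  hence "bin_half_tail m j \<le> bin_half_tail m (Suc (threshold m))"
    by (intro bin_half_tail_antimono) simp
  hence "real m * bin_half_tail m j \<le> real m * bin_half_tail m (Suc (threshold m))"
    by (intro mult_left_mono) auto
  thus False using assms threshold_tail_Suc_le[of m] by linarith
qed

lemma threshold_less:
  assumes "0 < m" "real m * bin_half_tail m j \<le> 1/2"
  shows "threshold m < j"
proof (rule ccontr)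
  assume "\<not> threshold m < j"
  hence "bin_half_tail m (threshold m) \<le> bin_half_tail m j"
    by (intro bin_half_tail_antimono) simp
  hence "real m * bin_half_tail m (threshold m) \<le> real m * bin_half_tail m j"
    by (intro mult_left_mono) auto
  thus False using assms threshold_tail_gt[OF assms(1)] by linarith
qed

text \<open>\<open>lo_dev\<close> and \<open>hi_dev\<close> bound \<open>threshold_excess\<close> from below (by
  \<open>bin_half_tail_beyond_center\<close>) and from above (by Hoeffding's inequality).\<close>

definition lo_dev :: "real \<Rightarrow> real" where
  "lo_dev M = sqrt (M * ln M) / 8"

definition hi_dev :: "real \<Rightarrow> real" where
  "hi_dev M = sqrt (M * ln (2 * M) / 2)"

definition large_enough :: "real \<Rightarrow> bool" where
  "large_enough M \<longleftrightarrow>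
     1 \<le> M \<and> 2 * sqrt M + 3/2 \<le> lo_dev M \<and> 4 * (2 * (lo_dev M + sqrt M + 1) + 1) \<le> M \<and>
     1/2 < M * sqrt M / (M + 1) *
             exp (- 4 * (lo_dev M + sqrt M + 1) * (2 * (lo_dev M + sqrt M + 1) + 1) / M) \<and>
     128 * hi_dev M + 128 \<le> M \<and> M / (64 * (lo_dev M - 1/2)) + 4 \<le> lo_dev M - 1"

lemma eventually_large_enough: "eventually (\<lambda>m. large_enough (real m)) sequentially"
proof -
  have "eventually large_enough at_top"
    unfolding large_enough_def lo_dev_def hi_dev_def by (intro eventually_conj; real_asymp)
  thus ?thesis by (rule eventually_compose_filterlim[OF _ filterlim_real_sequentially])
qed

definition threshold_excess :: "nat \<Rightarrow> real" where
  "threshold_excess m = real (threshold m) - real m / 2"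

definition window :: "nat \<Rightarrow> nat set" where
  "window m = {threshold m + 5..<threshold m + 5 + nat \<lfloor>real m / (64 * (threshold_excess m + 1))\<rfloor>}"

context
  fixes m :: nat
  assumes large: "large_enough (real m)"
begin

lemma large_enough_facts:
  shows large_pos: "0 < m"
    and large_lo_dev: "2 * sqrt (real m) + 3/2 \<le> lo_dev (real m)"
    and large_center: "4 * (2 * (lo_dev (real m) + sqrt (real m) + 1) + 1) \<le> real m"
    and large_beyond_center: "1/2 < real m * sqrt (real m) / (real m + 1) *
           exp (- 4 * (lo_dev (real m) + sqrt (real m) + 1) *
                (2 * (lo_dev (real m) + sqrt (real m) + 1) + 1) / real m)"
    and large_hi_dev: "128 * hi_dev (real m) + 128 \<le> real m"
    and large_window: "real m / (64 * (lo_dev (real m) - 1/2)) + 4 \<le> lo_dev (real m) - 1"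
  using large by (auto simp: large_enough_def)

lemma lo_dev_ge_3: "3 \<le> lo_dev (real m)"
proof -
  have "1 \<le> sqrt (real m)" using large_pos by simp
  thus ?thesis using large_lo_dev by linarith
qed

lemma hi_dev_nonneg: "0 \<le> hi_dev (real m)"
  using large_pos by (simp add: hi_dev_def)

lemma threshold_excess_ge: "lo_dev (real m) - 3/2 \<le> threshold_excess m"
proof -
  have "1/2 < real m * bin_half_tail m (m div 2 + nat \<lfloor>lo_dev (real m)\<rfloor>)"
    using large_pos lo_dev_ge_3 large_center large_beyond_center
    by (intro bin_half_tail_beyond_center) auto
  hence "m div 2 + nat \<lfloor>lo_dev (real m)\<rfloor> \<le> threshold m" by (rule le_threshold)
  moreover have "real m \<le> 2 * real (m div 2) + 1" by linarith
  ultimately show ?thesis using lo_dev_ge_3 unfolding threshold_excess_def by linarith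
qed

lemma threshold_excess_le: "threshold_excess m \<le> hi_dev (real m)"
proof -
  define u where "u = hi_dev (real m)"
  define j where "j = nat \<lceil>real m / 2 + u\<rceil>"
  have j: "real m / 2 + u \<le> real j" "real j \<le> real m / 2 + u + 1"
    using hi_dev_nonneg by (auto simp: j_def u_def)
  have "bin_half_tail m j \<le> exp (- 2 * u\<^sup>2 / real m)"
    using large_pos hi_dev_nonneg j by (intro bin_half_tail_hoeffding) (auto simp: u_def)
  also have "- 2 * u\<^sup>2 / real m = - ln (2 * real m)"
    using large_pos by (simp add: u_def hi_dev_def)
  also have "exp (- ln (2 * real m)) = 1 / (2 * real m)"
    using large_pos by (simp add: exp_minus inverse_eq_divide)
  finally have "real m * bin_half_tail m j \<le> 1/2"
    using large_pos by (simp add: field_simps)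
  hence "threshold m < j" by (rule threshold_less[OF large_pos])
  thus ?thesis using j unfolding threshold_excess_def u_def by linarith
qed

lemma window_length_bounds:
  defines "\<sigma> \<equiv> threshold_excess m"
  shows "real m / (128 * (\<sigma> + 1)) \<le> real (card (window m))"
    and "real (card (window m)) \<le> real m / (64 * (\<sigma> + 1))"
    and "real (card (window m)) + 4 \<le> \<sigma> + 1/2"
proof -
  define X where "X = real m / (64 * (\<sigma> + 1))"
  have \<sigma>: "lo_dev (real m) - 3/2 \<le> \<sigma>" "\<sigma> \<le> hi_dev (real m)"
    using threshold_excess_ge threshold_excess_le by (simp_all add: \<sigma>_def)
  have card: "card (window m) = nat \<lfloor>X\<rfloor>" by (simp add: window_def X_def \<sigma>_def)
  have "real m / (64 * (hi_dev (real m) + 1)) \<le> X"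
    unfolding X_def using \<sigma> lo_dev_ge_3 large_pos by (intro divide_left_mono) auto
  moreover have "2 \<le> real m / (64 * (hi_dev (real m) + 1))"
    using large_hi_dev hi_dev_nonneg by (simp add: field_simps)
  ultimately have "2 \<le> X" by linarith
  moreover have "X - 1 \<le> real (nat \<lfloor>X\<rfloor>)" by linarith
  moreover have "real m / (128 * (\<sigma> + 1)) = X / 2" by (simp add: X_def)
  ultimately show "real m / (128 * (\<sigma> + 1)) \<le> real (card (window m))"
    unfolding card by linarith
  show "real (card (window m)) \<le> real m / (64 * (\<sigma> + 1))"
    using \<open>2 \<le> X\<close> unfolding card X_def by simp
  have "X \<le> real m / (64 * (lo_dev (real m) - 1/2))"
    unfolding X_def using \<sigma> lo_dev_ge_3 large_pos by (intro divide_left_mono) auto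
  thus "real (card (window m)) + 4 \<le> \<sigma> + 1/2"
    using \<open>2 \<le> X\<close> large_window \<sigma> unfolding card by linarith
qed

lemma window_mem_bounds:
  assumes "L \<in> window m"
  shows "threshold m + 5 \<le> L"
    and "real (L - threshold m) \<le> real m / (64 * (threshold_excess m + 1)) + 4"
    and "real (L - threshold m) \<le> threshold_excess m + 1/2"
proof -
  have "L - threshold m < 5 + card (window m)" using assms by (auto simp: window_def)
  thus "real (L - threshold m) \<le> real m / (64 * (threshold_excess m + 1)) + 4"
    "real (L - threshold m) \<le> threshold_excess m + 1/2"
    using window_length_bounds by linarith+
  show "threshold m + 5 \<le> L" using assms by (simp add: window_def)
qed

lemma window_close:
  assumes "L \<in> window m"
  shows "real (L - threshold m) * (2 * (2 * real L + 1 - real m) / real m) \<le> 1/2"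
proof -
  define M \<sigma> k where "M = real m" and "\<sigma> = threshold_excess m" and "k = real (L - threshold m)"
  note L = window_mem_bounds[OF assms, folded \<sigma>_def k_def M_def]
  have \<sigma>: "3/2 \<le> \<sigma>" "\<sigma> \<le> hi_dev M"
    using threshold_excess_ge threshold_excess_le lo_dev_ge_3
    by (auto simp: \<sigma>_def M_def)
  have M: "0 < M" using large_pos by (simp add: M_def)
  have excess: "2 * real L + 1 - M = 2 * \<sigma> + 2 * k + 1"
    using L(1) by (simp add: \<sigma>_def k_def M_def threshold_excess_def of_nat_diff)
  have "k * (2 * real L + 1 - M) \<le> (M / (64 * (\<sigma> + 1)) + 4) * (4 * (\<sigma> + 1))"
    unfolding excess using L(2,3) \<sigma> by (intro mult_mono) (auto simp: k_def)
  also have "\<dots> = M / 16 + 16 * (\<sigma> + 1)" using \<sigma> by (simp add: field_simps)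
  also have "\<dots> \<le> M / 4" using \<sigma> large_hi_dev by (simp add: M_def)
  finally show ?thesis using M by (simp add: k_def M_def field_simps)
qed

lemma window_bin_half_ge:
  assumes "L \<in> window m"
  shows "threshold_excess m / (2 * real m * (real m + 1)) \<le> bin_half m L"
proof -
  define M D \<sigma> where "M = real m" and "D = threshold m" and "\<sigma> = threshold_excess m"
  note L = window_mem_bounds[OF assms, folded \<sigma>_def D_def M_def]
  have \<sigma>: "3/2 \<le> \<sigma>" "\<sigma> \<le> hi_dev M"
    using threshold_excess_ge threshold_excess_le lo_dev_ge_3
    by (auto simp: \<sigma>_def M_def)
  have D: "real D = M / 2 + \<sigma>" by (simp add: \<sigma>_def D_def M_def threshold_excess_def)
  define k where "k = real (L - D)"
  have L_eq: "real L = real D + k" using L(1) by (simp add: k_def D_def)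
  have "real L \<le> real m"
    using L_eq D L(3)[folded k_def] \<sigma> large_hi_dev hi_dev_nonneg
    unfolding M_def by linarith
  hence "L \<le> m" by simp
  moreover have "real m \<le> 2 * real L + 1"
    using L_eq D \<sigma> of_nat_0_le_iff[of "L - D"] unfolding M_def k_def by linarith
  ultimately have "bin_half m D / 2 \<le> bin_half m L"
    using L(1) window_close[OF assms] large_pos
    by (intro bin_half_ge_half_of_close) (auto simp: D_def)
  moreover have "\<sigma> / (M * (M + 1)) \<le> bin_half m D"
  proof -
    have "(real D - real m / 2) / (real m * (real m + 1)) \<le> bin_half m D"
      using threshold_le[of m] threshold_tail_gt[OF large_pos] D \<sigma>
      by (intro bin_half_ge_of_tail) (auto simp: D_def M_def)
    thus ?thesis using D by (simp add: M_def)
  qed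
  ultimately have "\<sigma> / (M * (M + 1)) / 2 \<le> bin_half m L"
    by (meson divide_right_mono order.trans zero_le_numeral)
  thus ?thesis by (simp add: \<sigma>_def M_def mult_ac)
qed

lemma window_term_ge:
  assumes L: "L \<in> window m"
  defines "T \<equiv> nat \<lfloor>real m / 2 + sqrt (real m)\<rfloor>"
  shows "threshold_excess m ^ 3 / (16 * (real m)\<^sup>2 * (real m + 1)\<^sup>2)
           \<le> (real L - real T - 2) * bin_half m L ^ 2 * bin_half_cdf m (L - 5) ^ m"
proof -
  define M \<sigma> where "M = real m" and "\<sigma> = threshold_excess m"
  have \<sigma>: "lo_dev M - 3/2 \<le> \<sigma>" "3/2 \<le> \<sigma>"
    using threshold_excess_ge lo_dev_ge_3 by (auto simp: \<sigma>_def M_def)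
  have M: "0 < M" using large_pos by (simp add: M_def)
  have "real T \<le> M / 2 + sqrt M" using M by (simp add: T_def M_def)
  moreover have "M / 2 + \<sigma> + 5 \<le> real L"
    using window_mem_bounds(1)[OF L] by (simp add: \<sigma>_def M_def threshold_excess_def)
  ultimately have gap: "\<sigma> / 2 \<le> real L - real T - 2"
    using \<sigma> large_lo_dev by (simp add: M_def)
  have "bin_half_tail m (Suc (L - 5)) \<le> bin_half_tail m (Suc (threshold m))"
    using window_mem_bounds(1)[OF L] by (intro bin_half_tail_antimono) simp
  hence "real m * bin_half_tail m (Suc (L - 5)) \<le> 1/2"
    using threshold_tail_Suc_le[of m] mult_left_mono[of _ _ "real m"] by fastforce
  hence cdf: "1/2 \<le> bin_half_cdf m (L - 5) ^ m" by (rule bin_half_cdf_pow_ge_half[OF large_pos])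
  have "\<sigma> ^ 3 / (16 * M\<^sup>2 * (M + 1)\<^sup>2) = \<sigma> / 2 * (\<sigma> / (2 * M * (M + 1)))\<^sup>2 * (1/2)"
    by (simp add: power2_eq_square power3_eq_cube field_simps)
  also have "\<dots> \<le> (real L - real T - 2) * bin_half m L ^ 2 * bin_half_cdf m (L - 5) ^ m"
    using gap cdf window_bin_half_ge[OF L] \<sigma> M
    by (intro mult_mono power_mono) (auto simp: \<sigma>_def M_def)
  finally show ?thesis by (simp add: \<sigma>_def M_def)
qed

lemma window_sum_ge:
  defines "T \<equiv> nat \<lfloor>real m / 2 + sqrt (real m)\<rfloor>"
  shows "ln (real m) / (2 ^ 22 * (real m)\<^sup>2)
           \<le> (\<Sum>L\<in>window m. (real L - real T - 2) * bin_half m L ^ 2 * bin_half_cdf m (L - 5) ^ m)"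
proof -
  define M \<sigma> \<tau> where "M = real m" and "\<sigma> = threshold_excess m"
    and "\<tau> = \<sigma> ^ 3 / (16 * M\<^sup>2 * (M + 1)\<^sup>2)"
  have M: "1 \<le> M" using large_pos by (simp add: M_def)
  have \<sigma>: "lo_dev M / 2 \<le> \<sigma>" "1 \<le> \<sigma>"
    using threshold_excess_ge lo_dev_ge_3 by (auto simp: \<sigma>_def M_def)
  have "(lo_dev M)\<^sup>2 = M * ln M / 64"
    using M by (simp add: lo_dev_def power_divide)
  hence ln_le: "M * ln M / 256 \<le> \<sigma>\<^sup>2"
    using power_mono[OF \<sigma>(1), of 2] lo_dev_ge_3 by (simp add: M_def power_divide)
  have "ln M / (2 ^ 22 * M\<^sup>2) \<le> ln M / (2 ^ 20 * (M + 1)\<^sup>2)"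
    using M power_mono[of "M + 1" "2 * M" 2] by (intro divide_left_mono) (auto simp: power_mult_distrib)
  also have "\<dots> = (M * ln M / 256) / (4096 * M * (M + 1)\<^sup>2)"
    using M by (simp add: field_simps)
  also have "\<dots> \<le> \<sigma>\<^sup>2 / (4096 * M * (M + 1)\<^sup>2)"
    using ln_le M by (intro divide_right_mono) auto
  also have "\<dots> = M / (256 * \<sigma>) * \<tau>"
    using M \<sigma> by (simp add: \<tau>_def divide_simps add_nonneg_eq_0_iff) algebra
  also have "\<dots> \<le> real (card (window m)) * \<tau>"
  proof -
    have "M / (256 * \<sigma>) \<le> M / (128 * (\<sigma> + 1))"
      using M \<sigma> by (intro divide_left_mono) auto
    thus ?thesis using window_length_bounds(1) \<sigma> M
      by (intro mult_right_mono) (auto simp: \<tau>_def M_def \<sigma>_def)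
  qed
  also have "\<dots> = (\<Sum>L\<in>window m. \<tau>)" by simp
  also have "\<dots> \<le> (\<Sum>L\<in>window m. (real L - real T - 2) * bin_half m L ^ 2 * bin_half_cdf m (L - 5) ^ m)"
    using window_term_ge by (intro sum_mono) (simp add: \<tau>_def \<sigma>_def M_def T_def)
  finally show ?thesis by (simp add: M_def)
qed

lemma expected_loss_ge_ln:
  assumes "t \<in> agents (m + 2)"
  shows "ln (real m) / 2 ^ 24 \<le> measure_pmf.expectation (uniform_model (m + 2) (1/2))
           (\<lambda>x. real (max_deg (m + 2) x) - real (deg (m + 2) x (avd (m + 2) t x)))"
proof -
  define M T where "M = real m" and "T = nat \<lfloor>real m / 2 + sqrt (real m)\<rfloor>"
  define S where "S = (\<Sum>L\<in>window m. (real L - real T - 2) * bin_half m L ^ 2 * bin_half_cdf m (L - 5) ^ m)"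
  have M: "1 \<le> M" using large_pos by (simp add: M_def)
  have "M\<^sup>2 \<le> real (m + 2) * (real (m + 2) - 1)" by (simp add: M_def power2_eq_square algebra_simps)
  hence pairs: "M\<^sup>2 / 2 \<le> real (card (nondefault_pairs (m + 2) t))"
    using card_nondefault_pairs_ge[OF assms] by linarith
  have "ln M / 2 ^ 24 = M\<^sup>2 / 2 * (1/2 * (ln M / (2 ^ 22 * M\<^sup>2)))"
    using M by (simp add: field_simps)
  also have "\<dots> \<le> real (card (nondefault_pairs (m + 2) t)) * (bin_half_cdf m T * S)"
    using pairs bin_half_cdf_above_center_ge[OF large_pos] window_sum_ge M
    by (intro mult_mono) (auto simp: S_def T_def M_def)
  also have "\<dots> \<le> measure_pmf.expectation (uniform_model (m + 2) (1/2))
                 (\<lambda>x. real (max_deg (m + 2) x) - real (deg (m + 2) x (avd (m + 2) t x)))"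
    using expected_loss_ge_window_sum[OF assms refl, of "window m" T]
    by (simp add: S_def window_def mult.assoc)
  finally show ?thesis by (simp add: M_def)
qed

end

lemma eventually_expected_loss_ge_ln:
  "eventually (\<lambda>n. \<forall>t \<in> agents n. ln (real n) / 2 ^ 25 \<le>
     measure_pmf.expectation (uniform_model n (1/2))
       (\<lambda>x. real (max_deg n x) - real (deg n x (avd n t x)))) sequentially"
proof -
  have "eventually (\<lambda>M::real. ln (M + 2) \<le> 2 * ln M) at_top" by real_asymp
  hence "eventually (\<lambda>m. ln (real m + 2) \<le> 2 * ln (real m)) sequentially"
    by (rule eventually_compose_filterlim[OF _ filterlim_real_sequentially])
  with eventually_large_enough
  have "eventually (\<lambda>m. large_enough (real m) \<and> ln (real m + 2) \<le> 2 * ln (real m)) sequentially"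
    by (rule eventually_conj)
  then obtain m0 where m0: "\<And>m. m0 \<le> m \<Longrightarrow> large_enough (real m) \<and> ln (real m + 2) \<le> 2 * ln (real m)"
    unfolding eventually_sequentially by blast
  show ?thesis unfolding eventually_sequentially
  proof (intro exI allI impI ballI)
    fix n t
    assume "m0 + 2 \<le> n" and t: "t \<in> agents n"
    define m where "m = n - 2"
    have n: "n = m + 2" "m0 \<le> m" using \<open>m0 + 2 \<le> n\<close> by (auto simp: m_def)
    have "ln (real m) / 2 ^ 24 \<le> measure_pmf.expectation (uniform_model n (1/2))
            (\<lambda>x. real (max_deg n x) - real (deg n x (avd n t x)))"
      using expected_loss_ge_ln[of m t] m0[OF n(2)] t n(1) by simp
    moreover have "ln (real n) \<le> 2 * ln (real m)" using m0[OF n(2)] n(1) by (simp add: add.commute)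
    ultimately show "ln (real n) / 2 ^ 25 \<le> measure_pmf.expectation (uniform_model n (1/2))
            (\<lambda>x. real (max_deg n x) - real (deg n x (avd n t x)))" by simp
  qed
qed

theorem mainTheorem10:
  shows "\<exists>c > 0. \<exists>n0. \<forall>n \<ge> n0. \<forall>t \<in> agents n.
           measure_pmf.expectation (uniform_model n (1/2))
             (\<lambda>x. real (max_deg n x) - real (deg n x (avd n t x))) \<ge> c * ln (real n)"
proof -
  obtain n0 where "\<forall>n \<ge> n0. \<forall>t \<in> agents n. ln (real n) / 2 ^ 25 \<le>
      measure_pmf.expectation (uniform_model n (1/2))
        (\<lambda>x. real (max_deg n x) - real (deg n x (avd n t x)))"
    using eventually_expected_loss_ge_ln unfolding eventually_sequentially by blast
  thus ?thesis by (intro exI[of _ "1 / 2 ^ 25"]) auto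
qed

end
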